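(* The set $\{\kappa_s: 1/2<\Re s<1\}$ spans a dense subspace of $H^2$.
   Context: $H^2$ denotes the Hardy space of analytic functions $f(z)=\sum_{k\ge0}\hat f(k)z^k$ on the open unit disk with $\sum_{k}|\hat f(k)|^2<\infty$. For $s\in\mathbb{C}\setminus\{0\}$ set $\varphi_0(s)=-\frac1s$ and $\varphi_k(s)=-\frac1s\left((k+1)^{1-s}-k^{1-s}\right)$ for $k\geq1$. For $\Re s>1/2$ the zeta kernel is $\kappa_s(z)=\sum_{k=0}^\infty\varphi_k(\bar s)z^k\in H^2$; equivalently $\langle f,\kappa_s\rangle=\Lambda^{(s)}(f)$ where $\Lambda^{(s)}$ is the bounded linear functional on $H^2$ with $\Lambda^{(s)}(z^k)=\varphi_k(s)$. *)

theory Defs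
  imports "HOL-Analysis.Analysis"
begin

text \<open>Elements of the Hardy space H^2 are represented by their Taylor coefficient
  sequences f k = hat f(k); H^2 is the set of square-summable coefficient sequences
  with the norm ||f|| = sqrt (sum_k |hat f(k)|^2).\<close>

definition H2 :: "(nat \<Rightarrow> complex) set" where
  "H2 = {f. summable (\<lambda>k. (cmod (f k))^2)}"

definition H2_norm :: "(nat \<Rightarrow> complex) \<Rightarrow> real" where
  "H2_norm f = sqrt (\<Sum>k. (cmod (f k))^2)"

definition phi :: "complex \<Rightarrow> nat \<Rightarrow> complex" where
  "phi s k = (if k = 0 then - 1 / s
              else - (1 / s) * ((of_nat (k + 1)) powr (1 - s) - (of_nat k) powr (1 - s)))"

text \<open>Coefficient sequence of the zeta kernel kappa_s: hat kappa_s(k) = phi_k(conj s).\<close>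
definition zeta_kernel :: "complex \<Rightarrow> nat \<Rightarrow> complex" where
  "zeta_kernel s = (\<lambda>k. phi (cnj s) k)"

end

theory Submission
  imports Defs "HOL-Complex_Analysis.Complex_Analysis"
begin

text \<open>If the span of the kernels were not dense, the projection theorem in \<open>H2\<close> (via a minimising
  sequence, the parallelogram law and completeness) would give \<open>h \<noteq> 0\<close> orthogonal to every
  \<open>\<kappa>\<^sub>s\<close>. Since \<open>cnj (\<kappa>\<^sub>s k) = -(1/s) ((k+1) powr (1-s) - k powr (1-s))\<close>, this says that
  \<open>D(s) = (\<Sum>k. h k ((k+1) powr (1-s) - k powr (1-s)))\<close> vanishes on the strip \<open>1/2 < Re s < 1\<close>.
  The series converges locally uniformly on \<open>Re s > 1/2\<close>, so \<open>D\<close> vanishes on the whole half-plane,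
  in particular at \<open>s = N + 2\<close>, where the weights become \<open>1/(k+1)^(N+1) - 1/k^(N+1)\<close>. Letting
  \<open>N \<rightarrow> \<infinity>\<close> shows inductively that all coefficients of \<open>h\<close> equal \<open>h 0\<close>, and square
  summability forces \<open>h = 0\<close>.\<close>

section \<open>The Hilbert space \<open>H\<^sup>2\<close> of square-summable sequences\<close>

definition H2_inner :: "(nat \<Rightarrow> complex) \<Rightarrow> (nat \<Rightarrow> complex) \<Rightarrow> complex" where
  "H2_inner f g = (\<Sum>k. f k * cnj (g k))"

lemma H2_summable: "f \<in> H2 \<Longrightarrow> summable (\<lambda>k. (cmod (f k))\<^sup>2)"
  by (simp add: H2_def)

lemma H2_norm_nonneg: "f \<in> H2 \<Longrightarrow> 0 \<le> H2_norm f"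
  by (simp add: H2_norm_def H2_def suminf_nonneg)

lemma H2_norm_power2: "f \<in> H2 \<Longrightarrow> (H2_norm f)\<^sup>2 = (\<Sum>k. (cmod (f k))\<^sup>2)"
  by (simp add: H2_norm_def H2_def suminf_nonneg)

lemma sum_le_H2_norm_power2: "f \<in> H2 \<Longrightarrow> (\<Sum>k<n. (cmod (f k))\<^sup>2) \<le> (H2_norm f)\<^sup>2"
  by (simp add: H2_norm_power2 H2_def sum_le_suminf)

lemma norm_le_H2_norm:
  assumes "f \<in> H2"
  shows "cmod (f k) \<le> H2_norm f"
proof -
  have "(cmod (f k))\<^sup>2 \<le> (\<Sum>j<Suc k. (cmod (f j))\<^sup>2)"
    by (rule member_le_sum) auto
  also have "\<dots> \<le> (H2_norm f)\<^sup>2"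
    by (rule sum_le_H2_norm_power2[OF assms])
  finally show ?thesis
    using H2_norm_nonneg[OF assms] by (rule power2_le_imp_le)
qed

lemma H2_norm_le_if_sum_le:
  assumes "\<And>n. (\<Sum>k<n. (cmod (f k))\<^sup>2) \<le> B\<^sup>2" and "0 \<le> B"
  shows "f \<in> H2" and "H2_norm f \<le> B"
proof -
  show f: "f \<in> H2"
    unfolding H2_def using assms(1) by (intro CollectI summableI_nonneg_bounded[where x = "B\<^sup>2"]) auto
  have "(H2_norm f)\<^sup>2 \<le> B\<^sup>2"
    unfolding H2_norm_power2[OF f] by (rule suminf_le_const[OF H2_summable[OF f] assms(1)])
  then show "H2_norm f \<le> B"
    using assms(2) by (rule power2_le_imp_le)
qed

lemma H2_zero [simp]: "(\<lambda>k. 0) \<in> H2"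
  by (simp add: H2_def)

lemma L2_set_le_H2_norm: "f \<in> H2 \<Longrightarrow> L2_set (\<lambda>k. cmod (f k)) {..<n} \<le> H2_norm f"
  using real_sqrt_le_mono[OF sum_le_H2_norm_power2] H2_norm_nonneg by (simp add: L2_set_def)

lemma H2_add:
  assumes "f \<in> H2" and "g \<in> H2"
  shows "(\<lambda>k. f k + g k) \<in> H2" and "H2_norm (\<lambda>k. f k + g k) \<le> H2_norm f + H2_norm g"
proof -
  have "L2_set (\<lambda>k. cmod (f k + g k)) {..<n} \<le> H2_norm f + H2_norm g" for n
  proof -
    have "L2_set (\<lambda>k. cmod (f k + g k)) {..<n} \<le> L2_set (\<lambda>k. cmod (f k) + cmod (g k)) {..<n}"
      by (rule L2_set_mono) (auto simp: norm_triangle_ineq)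
    also have "\<dots> \<le> L2_set (\<lambda>k. cmod (f k)) {..<n} + L2_set (\<lambda>k. cmod (g k)) {..<n}"
      by (rule L2_set_triangle_ineq)
    also have "\<dots> \<le> H2_norm f + H2_norm g"
      using assms by (intro add_mono L2_set_le_H2_norm)
    finally show ?thesis .
  qed
  then have "(\<Sum>k<n. (cmod (f k + g k))\<^sup>2) \<le> (H2_norm f + H2_norm g)\<^sup>2" for n
    unfolding L2_set_def by (rule sqrt_le_D)
  moreover have "0 \<le> H2_norm f + H2_norm g"
    using assms by (simp add: H2_norm_nonneg)
  ultimately show "(\<lambda>k. f k + g k) \<in> H2" and "H2_norm (\<lambda>k. f k + g k) \<le> H2_norm f + H2_norm g"
    by (rule H2_norm_le_if_sum_le)+
qed

lemma H2_scale:
  assumes "f \<in> H2"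
  shows "(\<lambda>k. c * f k) \<in> H2" and "H2_norm (\<lambda>k. c * f k) = cmod c * H2_norm f"
proof -
  have "summable (\<lambda>k. (cmod c)\<^sup>2 * (cmod (f k))\<^sup>2)"
    using H2_summable[OF assms] by (rule summable_mult)
  then show "(\<lambda>k. c * f k) \<in> H2"
    by (simp add: H2_def norm_mult power_mult_distrib)
  show "H2_norm (\<lambda>k. c * f k) = cmod c * H2_norm f"
    using H2_summable[OF assms]
    by (simp add: H2_norm_def norm_mult power_mult_distrib suminf_mult real_sqrt_mult)
qed

lemma H2_diff:
  assumes "f \<in> H2" and "g \<in> H2"
  shows "(\<lambda>k. f k - g k) \<in> H2" and "H2_norm (\<lambda>k. f k - g k) \<le> H2_norm f + H2_norm g"
  using H2_add[OF assms(1) H2_scale(1)[OF assms(2), of "-1"]] H2_scale(2)[OF assms(2), of "-1"]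
  by auto

lemma H2_norm_minus_commute: "H2_norm (\<lambda>k. f k - g k) = H2_norm (\<lambda>k. g k - f k)"
  by (simp add: H2_norm_def norm_minus_commute)

lemma H2_sum:
  assumes "finite S" and "\<And>s. s \<in> S \<Longrightarrow> g s \<in> H2"
  shows "(\<lambda>k. \<Sum>s\<in>S. c s * g s k) \<in> H2"
  using assms
proof (induction S rule: finite_induct)
  case (insert s S)
  then have "(\<lambda>k. c s * g s k + (\<Sum>s\<in>S. c s * g s k)) \<in> H2"
    by (intro H2_add H2_scale) auto
  with insert.hyps show ?case
    by simp
qed simp

lemma summable_norm_mult_H2:
  assumes "f \<in> H2" and "g \<in> H2"
  shows "summable (\<lambda>k. norm (f k * g k))"
proof (rule summable_comparison_test)
  show "summable (\<lambda>k. ((cmod (f k))\<^sup>2 + (cmod (g k))\<^sup>2) / 2)"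
    using assms by (intro summable_divide summable_add H2_summable)
  show "\<exists>N. \<forall>k\<ge>N. norm (norm (f k * g k)) \<le> ((cmod (f k))\<^sup>2 + (cmod (g k))\<^sup>2) / 2"
  proof (intro exI allI impI)
    fix k
    show "norm (norm (f k * g k)) \<le> ((cmod (f k))\<^sup>2 + (cmod (g k))\<^sup>2) / 2"
      using sum_squares_bound[of "cmod (f k)" "cmod (g k)"] by (simp add: norm_mult)
  qed
qed

lemma summable_mult_H2: "f \<in> H2 \<Longrightarrow> g \<in> H2 \<Longrightarrow> summable (\<lambda>k. f k * g k)"
  by (rule summable_norm_cancel[OF summable_norm_mult_H2])

lemma H2_if_norm_le:
  assumes "g \<in> H2" and "\<And>k. k \<ge> N \<Longrightarrow> cmod (f k) \<le> cmod (g k)"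
  shows "f \<in> H2"
  unfolding H2_def
proof (rule CollectI, rule summable_comparison_test'[OF H2_summable[OF assms(1)]])
  show "norm ((cmod (f k))\<^sup>2) \<le> (cmod (g k))\<^sup>2" if "k \<ge> N" for k
    using assms(2)[OF that] by (simp add: power_mono)
qed

lemma H2_powr:
  assumes "1 / 2 < \<sigma>"
  shows "(\<lambda>k. complex_of_real (real k powr - \<sigma>)) \<in> H2"
proof -
  have "(cmod (complex_of_real (real k powr - \<sigma>)))\<^sup>2 = real k powr (- 2 * \<sigma>)" for k
    by (simp add: power2_eq_square powr_add[symmetric])
  then show ?thesis
    using assms by (simp add: H2_def summable_real_powr_iff)
qed

lemma H2_cnj: "f \<in> H2 \<Longrightarrow> (\<lambda>k. cnj (f k)) \<in> H2"
  by (simp add: H2_def)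

lemma H2_norm_diff_scale_power2:
  assumes "f \<in> H2" and "g \<in> H2"
  shows "(H2_norm (\<lambda>k. f k - t * g k))\<^sup>2
           = (H2_norm f)\<^sup>2 - 2 * Re (cnj t * H2_inner f g) + (cmod t)\<^sup>2 * (H2_norm g)\<^sup>2"
proof -
  have ftg: "(\<lambda>k. f k - t * g k) \<in> H2"
    using assms by (intro H2_diff H2_scale)
  have "(\<lambda>k. f k * cnj (g k)) sums H2_inner f g"
    unfolding H2_inner_def using assms by (intro summable_sums summable_mult_H2 H2_cnj)
  then have cross: "(\<lambda>k. 2 * Re (cnj t * (f k * cnj (g k)))) sums (2 * Re (cnj t * H2_inner f g))"
    by (intro sums_mult sums_Re)
  have sq: "(\<lambda>k. (cmod (h k))\<^sup>2) sums (H2_norm h)\<^sup>2" if "h \<in> H2" for h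
    using that by (simp add: H2_norm_power2 summable_sums H2_summable)
  have "(\<lambda>k. (cmod (f k))\<^sup>2 - 2 * Re (cnj t * (f k * cnj (g k))) + (cmod t)\<^sup>2 * (cmod (g k))\<^sup>2)
      sums ((H2_norm f)\<^sup>2 - 2 * Re (cnj t * H2_inner f g) + (cmod t)\<^sup>2 * (H2_norm g)\<^sup>2)"
    by (intro sums_add sums_diff sums_mult cross sq assms)
  moreover have "(cmod (f k - t * g k))\<^sup>2
      = (cmod (f k))\<^sup>2 - 2 * Re (cnj t * (f k * cnj (g k))) + (cmod t)\<^sup>2 * (cmod (g k))\<^sup>2" for k
    by (simp only: cmod_power2) (simp add: power2_eq_square algebra_simps)
  ultimately show ?thesis
    using sq[OF ftg] sums_unique2 by simp
qed

lemma H2_parallelogram: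
  assumes "f \<in> H2" and "g \<in> H2"
  shows "(H2_norm (\<lambda>k. f k + g k))\<^sup>2 + (H2_norm (\<lambda>k. f k - g k))\<^sup>2
           = 2 * (H2_norm f)\<^sup>2 + 2 * (H2_norm g)\<^sup>2"
  using H2_norm_diff_scale_power2[OF assms, of 1] H2_norm_diff_scale_power2[OF assms, of "-1"]
  by simp

lemma H2_inner_eq_0_if_minimal:
  assumes "h \<in> H2" and "v \<in> H2" and min: "\<And>t. H2_norm h \<le> H2_norm (\<lambda>k. h k - t * v k)"
  shows "H2_inner h v = 0"
proof -
  define r where "r = 1 / ((H2_norm v)\<^sup>2 + 1)"
  have pos: "0 < (H2_norm v)\<^sup>2 + 1"
    by (rule add_nonneg_pos) simp_all
  then have r: "0 < r" "r * (H2_norm v)\<^sup>2 < 2"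
    by (simp_all add: r_def divide_less_eq)
  define t where "t = of_real r * H2_inner h v"
  \<comment> \<open>for this \<open>t\<close> the linear term of \<open>H2_norm_diff_scale_power2\<close> dominates the quadratic one\<close>
  have "(H2_norm h)\<^sup>2 \<le> (H2_norm (\<lambda>k. h k - t * v k))\<^sup>2"
    using min[of t] H2_norm_nonneg[OF assms(1)] by (intro power_mono) auto
  also have "\<dots> = (H2_norm h)\<^sup>2 - r * (cmod (H2_inner h v))\<^sup>2 * (2 - r * (H2_norm v)\<^sup>2)"
    unfolding H2_norm_diff_scale_power2[OF assms(1,2)] t_def
    by (simp only: cmod_power2) (simp add: power2_eq_square algebra_simps)
  finally have "(cmod (H2_inner h v))\<^sup>2 \<le> 0"
    using r by (simp add: mult_le_0_iff zero_le_mult_iff)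
  then show ?thesis
    by simp
qed

lemma H2_norm_le_if_coordinatewise_limit:
  assumes lim: "\<And>k. (\<lambda>m. F m k) \<longlonglongrightarrow> F0 k"
    and bound: "\<And>m. m \<ge> N \<Longrightarrow> F m \<in> H2 \<and> H2_norm (F m) \<le> B" and "0 \<le> B"
  shows "F0 \<in> H2" and "H2_norm F0 \<le> B"
proof -
  have "(\<Sum>k<K. (cmod (F0 k))\<^sup>2) \<le> B\<^sup>2" for K
  proof (rule LIMSEQ_le_const2)
    show "(\<lambda>m. \<Sum>k<K. (cmod (F m k))\<^sup>2) \<longlonglongrightarrow> (\<Sum>k<K. (cmod (F0 k))\<^sup>2)"
      by (intro tendsto_intros lim)
    have "(\<Sum>k<K. (cmod (F m k))\<^sup>2) \<le> B\<^sup>2" if "m \<ge> N" for m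
      using sum_le_H2_norm_power2[of "F m" K] power_mono[of "H2_norm (F m)" B 2]
        bound[OF that] H2_norm_nonneg[of "F m"] by linarith
    then show "\<exists>N. \<forall>m\<ge>N. (\<Sum>k<K. (cmod (F m k))\<^sup>2) \<le> B\<^sup>2"
      by blast
  qed
  then show "F0 \<in> H2" and "H2_norm F0 \<le> B"
    using H2_norm_le_if_sum_le \<open>0 \<le> B\<close> by blast+
qed

lemma convergent_coordinate_if_H2_Cauchy:
  assumes H2: "\<And>n. G n \<in> H2"
    and Cauchy: "\<And>e. 0 < e \<Longrightarrow> \<exists>N. \<forall>m\<ge>N. \<forall>n\<ge>N. H2_norm (\<lambda>k. G m k - G n k) < e"
  shows "convergent (\<lambda>n. G n k)"
proof (rule Cauchy_convergent, rule metric_CauchyI)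
  fix e :: real
  assume "0 < e"
  then obtain N where N: "\<forall>m\<ge>N. \<forall>n\<ge>N. H2_norm (\<lambda>k. G m k - G n k) < e"
    using Cauchy by blast
  show "\<exists>N. \<forall>m\<ge>N. \<forall>n\<ge>N. dist (G m k) (G n k) < e"
  proof (intro exI allI impI)
    fix m n
    assume "m \<ge> N" and "n \<ge> N"
    then show "dist (G m k) (G n k) < e"
      using N norm_le_H2_norm[OF H2_diff(1)[OF H2[of m] H2[of n]], of k]
      by (simp add: dist_norm order.strict_trans1)
  qed
qed

lemma H2_complete:
  assumes H2: "\<And>n. G n \<in> H2"
    and Cauchy: "\<And>e. 0 < e \<Longrightarrow> \<exists>N. \<forall>m\<ge>N. \<forall>n\<ge>N. H2_norm (\<lambda>k. G m k - G n k) < e"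
  obtains p where "p \<in> H2" and "(\<lambda>n. H2_norm (\<lambda>k. G n k - p k)) \<longlonglongrightarrow> 0"
proof -
  have GG: "(\<lambda>k. G m k - G n k) \<in> H2" for m n
    by (rule H2_diff(1)[OF H2 H2])
  have "convergent (\<lambda>n. G n k)" for k
    using H2 Cauchy by (rule convergent_coordinate_if_H2_Cauchy)
  then obtain p where p: "\<And>k. (\<lambda>n. G n k) \<longlonglongrightarrow> p k"
    unfolding convergent_def by metis
  have close: "\<exists>N. \<forall>n\<ge>N. (\<lambda>k. G n k - p k) \<in> H2 \<and> H2_norm (\<lambda>k. G n k - p k) \<le> e"
    if "0 < e" for e
  proof -
    obtain N where N: "\<And>m n. m \<ge> N \<Longrightarrow> n \<ge> N \<Longrightarrow> H2_norm (\<lambda>k. G n k - G m k) < e"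
      using Cauchy[OF \<open>0 < e\<close>] by blast
    have "(\<lambda>k. G n k - p k) \<in> H2 \<and> H2_norm (\<lambda>k. G n k - p k) \<le> e" if "n \<ge> N" for n
    proof -
      have lim: "(\<lambda>m. G n k - G m k) \<longlonglongrightarrow> G n k - p k" for k
        by (intro tendsto_diff tendsto_const p)
      have bound: "(\<lambda>k. G n k - G m k) \<in> H2 \<and> H2_norm (\<lambda>k. G n k - G m k) \<le> e" if "m \<ge> N" for m
        using GG N[OF that \<open>n \<ge> N\<close>] by (simp add: less_imp_le)
      show ?thesis
        using H2_norm_le_if_coordinatewise_limit[OF lim bound less_imp_le[OF \<open>0 < e\<close>]] by blast
    qed
    then show ?thesis
      by blast
  qed
  obtain N where N: "(\<lambda>k. G N k - p k) \<in> H2"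
    using close[of 1] by auto
  have "p \<in> H2"
    using H2_diff(1)[OF H2[of N] N] by simp
  moreover have "(\<lambda>n. H2_norm (\<lambda>k. G n k - p k)) \<longlonglongrightarrow> 0"
  proof (rule LIMSEQ_I)
    fix e :: real
    assume "0 < e"
    then obtain N where N: "\<forall>n\<ge>N. (\<lambda>k. G n k - p k) \<in> H2 \<and> H2_norm (\<lambda>k. G n k - p k) \<le> e / 2"
      using close[of "e / 2"] by auto
    show "\<exists>N. \<forall>n\<ge>N. norm (H2_norm (\<lambda>k. G n k - p k) - 0) < e"
    proof (intro exI allI impI)
      fix n
      assume "n \<ge> N"
      with N have "(\<lambda>k. G n k - p k) \<in> H2" and "H2_norm (\<lambda>k. G n k - p k) \<le> e / 2"
        by auto
      then show "norm (H2_norm (\<lambda>k. G n k - p k) - 0) < e"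
        using H2_norm_nonneg \<open>0 < e\<close> by simp
    qed
  qed
  ultimately show ?thesis
    using that by blast
qed

section \<open>Orthogonal complements\<close>

definition H2_subspace :: "(nat \<Rightarrow> complex) set \<Rightarrow> bool" where
  "H2_subspace V \<longleftrightarrow> V \<subseteq> H2 \<and> (\<lambda>k. 0) \<in> V \<and> (\<forall>u\<in>V. \<forall>v\<in>V. (\<lambda>k. u k + v k) \<in> V)
     \<and> (\<forall>c. \<forall>v\<in>V. (\<lambda>k. c * v k) \<in> V)"

lemma
  assumes "H2_subspace V"
  shows H2_subspace_subset: "V \<subseteq> H2"
    and H2_subspace_zero: "(\<lambda>k. 0) \<in> V"
    and H2_subspace_add: "u \<in> V \<Longrightarrow> v \<in> V \<Longrightarrow> (\<lambda>k. u k + v k) \<in> V"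
    and H2_subspace_scale: "v \<in> V \<Longrightarrow> (\<lambda>k. c * v k) \<in> V"
  using assms by (auto simp: H2_subspace_def)

lemma H2_norm_diff_power2_le_if_almost_minimal:
  assumes "f \<in> H2" and "a \<in> H2" and "b \<in> H2"
    and "d \<le> (H2_norm (\<lambda>k. f k - (a k + b k) / 2))\<^sup>2"
    and "(H2_norm (\<lambda>k. f k - a k))\<^sup>2 \<le> d + x" and "(H2_norm (\<lambda>k. f k - b k))\<^sup>2 \<le> d + y"
  shows "(H2_norm (\<lambda>k. a k - b k))\<^sup>2 \<le> 2 * (x + y)"
proof -
  have fa: "(\<lambda>k. f k - a k) \<in> H2" and fb: "(\<lambda>k. f k - b k) \<in> H2"
    using assms(1-3) by (auto intro: H2_diff)
  have ab: "(\<lambda>k. (a k + b k) / 2) \<in> H2"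
    using H2_scale(1)[OF H2_add(1)[OF assms(2,3)], of "1 / 2"] by simp
  have "(\<lambda>k. (f k - a k) + (f k - b k)) = (\<lambda>k. 2 * (f k - (a k + b k) / 2))"
    by (simp add: fun_eq_iff algebra_simps)
  then have "H2_norm (\<lambda>k. (f k - a k) + (f k - b k)) = 2 * H2_norm (\<lambda>k. f k - (a k + b k) / 2)"
    using H2_scale(2)[OF H2_diff(1)[OF assms(1) ab], of 2] by simp
  then have "4 * d \<le> (H2_norm (\<lambda>k. (f k - a k) + (f k - b k)))\<^sup>2"
    using assms(4) by (simp add: power_mult_distrib)
  moreover have "H2_norm (\<lambda>k. (f k - a k) - (f k - b k)) = H2_norm (\<lambda>k. a k - b k)"
    by (subst H2_norm_minus_commute) simp
  ultimately show ?thesis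
    using H2_parallelogram[OF fa fb] assms(5,6) by (smt (verit))
qed

lemma H2_minimizing_sequence_converges:
  assumes V: "H2_subspace V" and f: "f \<in> H2"
    and min: "\<And>g. g \<in> V \<Longrightarrow> d \<le> (H2_norm (\<lambda>k. f k - g k))\<^sup>2"
    and G: "\<And>n. G n \<in> V" and near: "\<And>n. (H2_norm (\<lambda>k. f k - G n k))\<^sup>2 \<le> d + e n"
    and e: "e \<longlonglongrightarrow> 0"
  obtains p where "p \<in> H2" and "(\<lambda>n. H2_norm (\<lambda>k. G n k - p k)) \<longlonglongrightarrow> 0"
proof (rule H2_complete)
  have GH2: "G n \<in> H2" for n
    using G H2_subspace_subset[OF V] by blast
  have "(\<lambda>k. (1 / 2) * (G m k + G n k)) \<in> V" for m n
    using G by (intro H2_subspace_scale[OF V] H2_subspace_add[OF V])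
  then have "d \<le> (H2_norm (\<lambda>k. f k - (G m k + G n k) / 2))\<^sup>2" for m n
    using min by simp
  then have bound: "(H2_norm (\<lambda>k. G m k - G n k))\<^sup>2 \<le> 2 * (e m + e n)" for m n
    using H2_norm_diff_power2_le_if_almost_minimal[OF f GH2 GH2 _ near near] by blast
  show "\<exists>N. \<forall>m\<ge>N. \<forall>n\<ge>N. H2_norm (\<lambda>k. G m k - G n k) < \<epsilon>" if "0 < \<epsilon>" for \<epsilon>
  proof -
    have "\<forall>\<^sub>F n in sequentially. e n < \<epsilon>\<^sup>2 / 4"
      using e that by (intro order_tendstoD) auto
    then obtain N where N: "\<And>n. n \<ge> N \<Longrightarrow> e n < \<epsilon>\<^sup>2 / 4"
      unfolding eventually_sequentially by blast
    have "H2_norm (\<lambda>k. G m k - G n k) < \<epsilon>" if "m \<ge> N" "n \<ge> N" for m n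
    proof (rule power2_less_imp_less)
      show "(H2_norm (\<lambda>k. G m k - G n k))\<^sup>2 < \<epsilon>\<^sup>2"
        using bound[of m n] N[OF \<open>m \<ge> N\<close>] N[OF \<open>n \<ge> N\<close>] by (simp add: field_simps)
    qed (use \<open>0 < \<epsilon>\<close> in simp)
    then show ?thesis
      by blast
  qed
  show "G n \<in> H2" for n
    by (rule GH2)
qed (rule that)

lemma tendsto_H2_norm_diff:
  assumes "f \<in> H2" and "p \<in> H2" and "\<And>n. G n \<in> H2"
    and lim: "(\<lambda>n. H2_norm (\<lambda>k. G n k - p k)) \<longlonglongrightarrow> 0"
  shows "(\<lambda>n. H2_norm (\<lambda>k. f k - G n k)) \<longlonglongrightarrow> H2_norm (\<lambda>k. f k - p k)"
proof (rule LIM_zero_cancel, rule Lim_null_comparison[OF _ lim])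
  have "\<bar>H2_norm (\<lambda>k. f k - G n k) - H2_norm (\<lambda>k. f k - p k)\<bar> \<le> H2_norm (\<lambda>k. G n k - p k)" for n
  proof -
    have fp: "(\<lambda>k. f k - p k) \<in> H2" and fG: "(\<lambda>k. f k - G n k) \<in> H2" and Gp: "(\<lambda>k. G n k - p k) \<in> H2"
      using assms by (auto intro: H2_diff)
    have "H2_norm (\<lambda>k. f k - G n k) \<le> H2_norm (\<lambda>k. f k - p k) + H2_norm (\<lambda>k. G n k - p k)"
      using H2_diff(2)[OF fp Gp] by simp
    moreover have "H2_norm (\<lambda>k. f k - p k) \<le> H2_norm (\<lambda>k. f k - G n k) + H2_norm (\<lambda>k. G n k - p k)"
      using H2_add(2)[OF fG Gp] by simp
    ultimately show ?thesis
      by linarith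
  qed
  then show "\<forall>\<^sub>F n in sequentially.
      norm (H2_norm (\<lambda>k. f k - G n k) - H2_norm (\<lambda>k. f k - p k)) \<le> H2_norm (\<lambda>k. G n k - p k)"
    by simp
qed

lemma H2_minimizing_sequence_exists:
  assumes V: "H2_subspace V"
  obtains d G where "\<And>g. g \<in> V \<Longrightarrow> d \<le> (H2_norm (\<lambda>k. f k - g k))\<^sup>2" and "\<And>n. G n \<in> V"
    and "\<And>n. (H2_norm (\<lambda>k. f k - G n k))\<^sup>2 < d + inverse (real (Suc n))"
proof -
  define D where "D = (\<lambda>g. (H2_norm (\<lambda>k. f k - g k))\<^sup>2) ` V"
  have "D \<noteq> {}" and "bdd_below D"
    using H2_subspace_zero[OF V] by (auto simp: D_def intro: bdd_belowI[of _ 0])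
  then have "Inf D \<le> (H2_norm (\<lambda>k. f k - g k))\<^sup>2" if "g \<in> V" for g
    using that by (intro cInf_lower) (auto simp: D_def)
  moreover have "\<exists>g\<in>V. (H2_norm (\<lambda>k. f k - g k))\<^sup>2 < Inf D + inverse (real (Suc n))" for n
    using cInf_lessD[OF \<open>D \<noteq> {}\<close>, of "Inf D + inverse (real (Suc n))"] by (auto simp: D_def)
  ultimately show ?thesis
    using that by metis
qed

lemma H2_best_approximation:
  assumes V: "H2_subspace V" and f: "f \<in> H2"
  obtains p where "p \<in> H2" and "\<And>\<epsilon>. 0 < \<epsilon> \<Longrightarrow> \<exists>g\<in>V. H2_norm (\<lambda>k. p k - g k) < \<epsilon>"
    and "\<And>v t. v \<in> V \<Longrightarrow> H2_norm (\<lambda>k. f k - p k) \<le> H2_norm (\<lambda>k. f k - p k - t * v k)"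
proof -
  have VH2: "g \<in> H2" if "g \<in> V" for g
    using that H2_subspace_subset[OF V] by blast
  obtain d G where min: "\<And>g. g \<in> V \<Longrightarrow> d \<le> (H2_norm (\<lambda>k. f k - g k))\<^sup>2" and G: "\<And>n. G n \<in> V"
    and near: "\<And>n. (H2_norm (\<lambda>k. f k - G n k))\<^sup>2 < d + inverse (real (Suc n))"
    using H2_minimizing_sequence_exists[OF V] by blast
  obtain p where p: "p \<in> H2" and lim: "(\<lambda>n. H2_norm (\<lambda>k. G n k - p k)) \<longlonglongrightarrow> 0"
    using H2_minimizing_sequence_converges[OF V f min G less_imp_le[OF near] LIMSEQ_inverse_real_of_nat]
    by blast
  have norm_tendsto: "(\<lambda>n. (H2_norm (\<lambda>k. h k - G n k))\<^sup>2) \<longlonglongrightarrow> (H2_norm (\<lambda>k. h k - p k))\<^sup>2" if "h \<in> H2" for h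
    using tendsto_H2_norm_diff[OF that p VH2[OF G] lim] by (rule tendsto_power)
  show ?thesis
  proof (rule that[OF p])
    fix \<epsilon> :: real
    assume "0 < \<epsilon>"
    with lim have "\<forall>\<^sub>F n in sequentially. H2_norm (\<lambda>k. G n k - p k) < \<epsilon>"
      by (rule order_tendstoD)
    then obtain n where "H2_norm (\<lambda>k. G n k - p k) < \<epsilon>"
      using eventually_sequentially by auto
    then show "\<exists>g\<in>V. H2_norm (\<lambda>k. p k - g k) < \<epsilon>"
      using G H2_norm_minus_commute by metis
  next
    fix v t
    assume v: "v \<in> V"
    have ftv: "(\<lambda>k. f k - t * v k) \<in> H2"
      using f VH2[OF v] by (intro H2_diff(1) H2_scale(1))
    have "(H2_norm (\<lambda>k. f k - p k))\<^sup>2 \<le> d"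
    proof (rule LIMSEQ_le[OF norm_tendsto[OF f]])
      show "(\<lambda>n. d + inverse (real (Suc n))) \<longlonglongrightarrow> d"
        using tendsto_add[OF tendsto_const LIMSEQ_inverse_real_of_nat, of d] by simp
      show "\<exists>N. \<forall>n\<ge>N. (H2_norm (\<lambda>k. f k - G n k))\<^sup>2 \<le> d + inverse (real (Suc n))"
        using less_imp_le[OF near] by blast
    qed
    also have "d \<le> (H2_norm (\<lambda>k. f k - t * v k - p k))\<^sup>2"
    proof (rule LIMSEQ_le_const[OF norm_tendsto[OF ftv]])
      have "d \<le> (H2_norm (\<lambda>k. f k - (G n k + t * v k)))\<^sup>2" for n
        using G v by (intro min H2_subspace_add[OF V] H2_subspace_scale[OF V])
      moreover have "(\<lambda>k. f k - (G n k + t * v k)) = (\<lambda>k. f k - t * v k - G n k)" for n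
        by (simp add: fun_eq_iff)
      ultimately show "\<exists>N. \<forall>n\<ge>N. d \<le> (H2_norm (\<lambda>k. f k - t * v k - G n k))\<^sup>2"
        by simp
    qed
    also have "(\<lambda>k. f k - t * v k - p k) = (\<lambda>k. f k - p k - t * v k)"
      by (simp add: fun_eq_iff)
    finally have "(H2_norm (\<lambda>k. f k - p k))\<^sup>2 \<le> (H2_norm (\<lambda>k. f k - p k - t * v k))\<^sup>2" .
    moreover have "0 \<le> H2_norm (\<lambda>k. f k - p k - t * v k)"
      using f p VH2[OF v] by (intro H2_norm_nonneg H2_diff(1) H2_scale(1))
    ultimately show "H2_norm (\<lambda>k. f k - p k) \<le> H2_norm (\<lambda>k. f k - p k - t * v k)"
      by (rule power2_le_imp_le)
  qed
qed

lemma H2_nonzero_orthogonal_if_not_dense: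
  assumes V: "H2_subspace V" and f: "f \<in> H2" and "0 < \<epsilon>"
    and far: "\<And>g. g \<in> V \<Longrightarrow> \<epsilon> \<le> H2_norm (\<lambda>k. f k - g k)"
  obtains h where "h \<in> H2" and "h \<noteq> (\<lambda>k. 0)" and "\<And>v. v \<in> V \<Longrightarrow> H2_inner h v = 0"
proof -
  obtain p where p: "p \<in> H2" and closure: "\<And>\<epsilon>. 0 < \<epsilon> \<Longrightarrow> \<exists>g\<in>V. H2_norm (\<lambda>k. p k - g k) < \<epsilon>"
    and best: "\<And>v t. v \<in> V \<Longrightarrow> H2_norm (\<lambda>k. f k - p k) \<le> H2_norm (\<lambda>k. f k - p k - t * v k)"
    using H2_best_approximation[OF V f] by blast
  show ?thesis
  proof (rule that)
    show fp: "(\<lambda>k. f k - p k) \<in> H2"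
      using f p by (rule H2_diff)
    show "(\<lambda>k. f k - p k) \<noteq> (\<lambda>k. 0)"
    proof
      assume "(\<lambda>k. f k - p k) = (\<lambda>k. 0)"
      then have "f = p"
        by (simp add: fun_eq_iff)
      then show False
        using closure[OF \<open>0 < \<epsilon>\<close>] far by force
    qed
    show "H2_inner (\<lambda>k. f k - p k) v = 0" if "v \<in> V" for v
      using fp H2_subspace_subset[OF V] that best[OF that]
      by (intro H2_inner_eq_0_if_minimal) auto
  qed
qed

section \<open>The zeta kernels\<close>

definition pow_increment :: "complex \<Rightarrow> nat \<Rightarrow> complex" where
  "pow_increment s k = of_nat (Suc k) powr (1 - s) - of_nat k powr (1 - s)"

lemma phi_eq_pow_increment: "phi s k = - (1 / s) * pow_increment s k"
  by (simp add: phi_def pow_increment_def)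

lemma cnj_zeta_kernel: "cnj (zeta_kernel s k) = - (1 / s) * pow_increment s k"
proof -
  have "cnj (of_nat n powr (1 - cnj s)) = of_nat n powr (1 - s)" for n
    by (subst cnj_powr) auto
  from this[of "Suc k"] this[of k] have "cnj (pow_increment (cnj s) k) = pow_increment s k"
    by (simp only: pow_increment_def complex_cnj_diff)
  then show ?thesis
    by (simp add: zeta_kernel_def phi_eq_pow_increment)
qed

lemma norm_pow_increment_le:
  assumes "0 \<le> \<sigma>" and "\<sigma> \<le> Re s" and "1 \<le> k"
  shows "cmod (pow_increment s k) \<le> cmod (1 - s) * real k powr (- \<sigma>)"
proof -
  let ?S = "closed_segment (of_real (real k)) (of_real (real (Suc k))) :: complex set"
  have S: "z \<in> \<real> \<and> real k \<le> Re z" if "z \<in> ?S" for z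
    using that unfolding closed_segment_of_real closed_segment_eq_real_ivl by auto
  have "cmod (of_real (real (Suc k)) powr (1 - s) - of_real (real k) powr (1 - s))
        \<le> (cmod (1 - s) * real k powr (- \<sigma>)) * cmod (of_real (real (Suc k)) - of_real (real k) :: complex)"
  proof (rule field_differentiable_bound[OF convex_closed_segment])
    fix z
    assume z: "z \<in> ?S"
    then have "z \<notin> \<real>\<^sub>\<le>\<^sub>0"
      using S[OF z] assms(3) by (auto simp: complex_nonpos_Reals_iff)
    then show "((\<lambda>z. z powr (1 - s)) has_field_derivative (1 - s) * z powr (1 - s - 1)) (at z within ?S)"
      by (rule has_field_derivative_at_within[OF has_field_derivative_powr])
    have "cmod (z powr (1 - s - 1)) = Re z powr (- Re s)"
      using S[OF z] assms(3) by (subst norm_powr_real_powr) auto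
    also have "\<dots> \<le> real k powr (- Re s)"
      using S[OF z] assms by (intro powr_mono2') auto
    also have "\<dots> \<le> real k powr (- \<sigma>)"
      using assms by (intro powr_mono) auto
    finally show "cmod ((1 - s) * z powr (1 - s - 1)) \<le> cmod (1 - s) * real k powr (- \<sigma>)"
      by (simp add: norm_mult mult_left_mono)
  qed (rule ends_in_segment)+
  then show ?thesis
    by (simp add: pow_increment_def)
qed

lemma pow_increment_H2:
  assumes "1 / 2 < Re s"
  shows "pow_increment s \<in> H2"
proof -
  have "(\<lambda>k. of_real (cmod (1 - s)) * complex_of_real (real k powr - Re s)) \<in> H2"
    using assms by (intro H2_scale H2_powr)
  then show ?thesis
    by (rule H2_if_norm_le[where N = 1]) (use assms norm_pow_increment_le[of "Re s" s] in \<open>auto simp: norm_mult\<close>)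
qed

lemma zeta_kernel_H2:
  assumes "1 / 2 < Re s"
  shows "zeta_kernel s \<in> H2"
proof -
  have "(\<lambda>k. - (1 / cnj s) * pow_increment (cnj s) k) \<in> H2"
    using assms by (intro H2_scale pow_increment_H2) simp
  then show ?thesis
    by (simp add: zeta_kernel_def phi_eq_pow_increment)
qed

definition pow_increment_series :: "(nat \<Rightarrow> complex) \<Rightarrow> complex \<Rightarrow> complex" where
  "pow_increment_series h s = (\<Sum>k. h k * pow_increment s k)"

lemma H2_inner_zeta_kernel:
  assumes "h \<in> H2" and "1 / 2 < Re s"
  shows "H2_inner h (zeta_kernel s) = - (1 / s) * pow_increment_series h s"
proof -
  have "H2_inner h (zeta_kernel s) = (\<Sum>k. - (1 / s) * (h k * pow_increment s k))"
    unfolding H2_inner_def cnj_zeta_kernel by (simp add: algebra_simps)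
  also have "\<dots> = - (1 / s) * pow_increment_series h s"
    unfolding pow_increment_series_def
    using assms by (intro suminf_mult summable_mult_H2 pow_increment_H2)
  finally show ?thesis .
qed

lemma uniform_limit_pow_increment_series:
  assumes h: "h \<in> H2" and "1 / 2 < \<sigma>" and A: "\<And>s. s \<in> A \<Longrightarrow> \<sigma> \<le> Re s \<and> cmod (1 - s) \<le> R"
  shows "uniform_limit A (\<lambda>n s. \<Sum>k<n. h k * pow_increment s k) (pow_increment_series h) sequentially"
  unfolding pow_increment_series_def
proof (rule Weierstrass_m_test_ev)
  show "summable (\<lambda>k. R * norm (h k * complex_of_real (real k powr - \<sigma>)))"
    using assms by (intro summable_mult summable_norm_mult_H2 H2_powr)
  have "norm (h k * pow_increment s k) \<le> R * norm (h k * complex_of_real (real k powr - \<sigma>))"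
    if "k \<ge> 1" and "s \<in> A" for k s
  proof -
    have "cmod (pow_increment s k) \<le> cmod (1 - s) * real k powr - \<sigma>"
      using A[OF \<open>s \<in> A\<close>] \<open>1 / 2 < \<sigma>\<close> \<open>k \<ge> 1\<close> by (intro norm_pow_increment_le) auto
    also have "\<dots> \<le> R * real k powr - \<sigma>"
      using A[OF \<open>s \<in> A\<close>] by (intro mult_right_mono) auto
    finally have "cmod (h k) * cmod (pow_increment s k) \<le> cmod (h k) * (R * real k powr - \<sigma>)"
      by (rule mult_left_mono) simp
    then show ?thesis
      by (simp add: norm_mult mult_ac)
  qed
  then show "\<forall>\<^sub>F k in sequentially. \<forall>s\<in>A.
      norm (h k * pow_increment s k) \<le> R * norm (h k * complex_of_real (real k powr - \<sigma>))"
    unfolding eventually_sequentially by blast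
qed

lemma holomorphic_pow_increment_series:
  assumes h: "h \<in> H2"
  shows "pow_increment_series h holomorphic_on {s. 1 / 2 < Re s}"
proof (rule holomorphic_uniform_sequence[OF open_halfspace_Re_gt])
  show "(\<lambda>s. \<Sum>k<n. h k * pow_increment s k) holomorphic_on {s. 1 / 2 < Re s}" for n
    unfolding pow_increment_def by (intro holomorphic_intros)
  fix x :: complex
  assume "x \<in> {s. 1 / 2 < Re s}"
  define \<delta> where "\<delta> = (Re x - 1 / 2) / 2"
  have \<delta>: "0 < \<delta>" and \<sigma>: "1 / 2 < Re x - \<delta>"
    using \<open>x \<in> _\<close> by (simp_all add: \<delta>_def field_simps)
  have ball: "Re x - \<delta> \<le> Re s \<and> cmod (1 - s) \<le> cmod (1 - x) + \<delta>" if "s \<in> cball x \<delta>" for s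
  proof -
    have "cmod (x - s) \<le> \<delta>"
      using that by (simp add: dist_norm)
    moreover have "\<bar>Re (x - s)\<bar> \<le> cmod (x - s)" and "cmod (1 - s) \<le> cmod (1 - x) + cmod (x - s)"
      using abs_Re_le_cmod[of "x - s"] norm_triangle_ineq[of "1 - x" "x - s"] by simp_all
    ultimately show ?thesis
      by simp
  qed
  then have "cball x \<delta> \<subseteq> {s. 1 / 2 < Re s}"
    using \<sigma> by fastforce
  moreover have "uniform_limit (cball x \<delta>) (\<lambda>n s. \<Sum>k<n. h k * pow_increment s k) (pow_increment_series h) sequentially"
    using h \<sigma> ball by (rule uniform_limit_pow_increment_series)
  ultimately show "\<exists>d>0. cball x d \<subseteq> {s. 1 / 2 < Re s} \<and>
      uniform_limit (cball x d) (\<lambda>n s. \<Sum>k<n. h k * pow_increment s k) (pow_increment_series h) sequentially"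
    using \<delta> by blast
qed

lemma pow_increment_series_eq_0:
  assumes "h \<in> H2" and strip: "\<And>s. 1 / 2 < Re s \<Longrightarrow> Re s < 1 \<Longrightarrow> pow_increment_series h s = 0"
    and "1 / 2 < Re s"
  shows "pow_increment_series h s = 0"
proof -
  let ?U = "{s. 1 / 2 < Re s \<and> Re s < 1}" and ?H = "{s. 1 / 2 < Re s}"
  have U: "open ?U"
    by (simp only: Collect_conj_eq) (intro open_Int open_halfspace_Re_gt open_halfspace_Re_lt)
  have "3 / 4 \<in> ?U"
    by simp
  then have "?U \<noteq> {}"
    by blast
  have "pow_increment_series h s = (\<lambda>_. 0) s"
  proof (rule analytic_continuation_open[where f = "pow_increment_series h"])
    show "open ?U" and "open ?H" and "?U \<noteq> {}"
      by (fact U open_halfspace_Re_gt \<open>?U \<noteq> {}\<close>)+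
    show "connected ?H"
      by (intro convex_connected convex_halfspace_Re_gt)
    show "pow_increment_series h holomorphic_on ?H"
      using assms(1) by (rule holomorphic_pow_increment_series)
  qed (use strip assms(3) in auto)
  then show ?thesis
    by simp
qed

section \<open>Vanishing of the increment series at the integers\<close>

lemma norm_suminf_telescoping_tail_le:
  fixes w :: "nat \<Rightarrow> real"
  assumes bound: "\<And>k. cmod (a k) \<le> B" and dec: "\<And>k. n \<le> k \<Longrightarrow> w (Suc k) \<le> w k"
    and lim: "w \<longlonglongrightarrow> 0"
  shows "cmod (\<Sum>j. a (j + n) * of_real (w (Suc (j + n)) - w (j + n))) \<le> B * w n"
proof -
  have "(\<lambda>j. w (j + n)) \<longlonglongrightarrow> 0"
    using lim by (rule LIMSEQ_ignore_initial_segment)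
  from telescope_sums'[OF this] have tele: "(\<lambda>j. B * (w (j + n) - w (Suc (j + n)))) sums (B * w n)"
    by (simp add: sums_mult)
  have le: "norm (a (j + n) * of_real (w (Suc (j + n)) - w (j + n))) \<le> B * (w (j + n) - w (Suc (j + n)))" for j
    using mult_right_mono[OF bound, of "w (j + n) - w (Suc (j + n))" "j + n"] dec[of "j + n"]
    by (simp add: norm_mult flip: of_real_diff)
  have "cmod (\<Sum>j. a (j + n) * of_real (w (Suc (j + n)) - w (j + n)))
        \<le> (\<Sum>j. B * (w (j + n) - w (Suc (j + n))))"
    by (rule norm_suminf_le[OF le sums_summable[OF tele]])
  also have "\<dots> = B * w n"
    using tele by (rule sums_unique[symmetric])
  finally show ?thesis .
qed

lemma norm_diff_le_if_telescoping_sum_eq_0: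
  fixes w :: "nat \<Rightarrow> real"
  assumes bound: "\<And>k. cmod (h k) \<le> B"
    and sum: "(\<lambda>k. h k * of_real (w (Suc k) - w k)) sums 0"
    and "w 0 = 0" and nonneg: "\<And>k. 0 \<le> w k" and dec: "\<And>k. m \<le> k \<Longrightarrow> w (Suc k) \<le> w k"
    and lim: "w \<longlonglongrightarrow> 0"
    and const: "\<And>j. j < m \<Longrightarrow> h j = c"
  shows "cmod (c - h m) * w m \<le> 2 * B * w (Suc m)"
proof -
  define t where "t k = h k * of_real (w (Suc k) - w k)" for k
  define T where "T = (\<Sum>j. t (j + Suc m))"
  have "(\<Sum>k<m. t k) = c * of_real (\<Sum>k<m. w (Suc k) - w k)"
    using const by (simp add: t_def sum_distrib_left)
  also have "(\<Sum>k<m. w (Suc k) - w k) = w m"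
    by (simp add: sum_lessThan_telescope \<open>w 0 = 0\<close>)
  finally have "0 = T + (c * of_real (w m) + t m)"
    using suminf_split_initial_segment[OF sums_summable[OF sum], of "Suc m"] sums_unique[OF sum]
    by (simp add: t_def T_def)
  then have "(c - h m) * of_real (w m) = - (h m * of_real (w (Suc m)) + T)"
    by (simp add: t_def algebra_simps)
  then have "cmod (c - h m) * w m = cmod (h m * of_real (w (Suc m)) + T)"
    using nonneg by (metis abs_of_nonneg norm_minus_cancel norm_mult norm_of_real)
  also have "\<dots> \<le> cmod (h m) * w (Suc m) + cmod T"
    using norm_triangle_ineq[of "h m * of_real (w (Suc m))" T] nonneg by (simp add: norm_mult)
  also have "\<dots> \<le> B * w (Suc m) + B * w (Suc m)"
  proof (rule add_mono)
    show "cmod (h m) * w (Suc m) \<le> B * w (Suc m)"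
      by (rule mult_right_mono[OF bound nonneg])
    show "cmod T \<le> B * w (Suc m)"
      unfolding T_def t_def using dec lim by (intro norm_suminf_telescoping_tail_le[OF bound]) auto
  qed
  finally show ?thesis
    by simp
qed

lemma coefficient_eq_if_inverse_power_sums_vanish:
  assumes h: "h \<in> H2"
    and sums: "\<And>N. (\<lambda>k. h k * of_real (1 / real (Suc k) ^ Suc N - 1 / real k ^ Suc N)) sums 0"
    and "1 \<le> m" and const: "\<And>j. j < m \<Longrightarrow> h j = c"
  shows "h m = c"
proof -
  define q where "q = real m / real (Suc m)"
  \<comment> \<open>in the \<open>N\<close>-th sum, the weight of \<open>h m\<close> beats that of all later coefficients by the factor \<open>q ^ Suc N\<close>\<close>
  have "cmod (c - h m) \<le> 2 * H2_norm h * q ^ Suc N" for N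
  proof -
    define w where "w k = 1 / real k ^ Suc N" for k
    have "(\<lambda>k. h k * of_real (w (Suc k) - w k)) sums 0"
      using sums[of N] by (simp add: w_def)
    moreover have "w 0 = 0" and "0 \<le> w k" for k
      by (simp_all add: w_def)
    moreover have "w (Suc k) \<le> w k" if "m \<le> k" for k
      unfolding w_def using that \<open>1 \<le> m\<close> by (intro divide_left_mono power_mono mult_pos_pos) auto
    moreover have "w \<longlonglongrightarrow> 0"
      unfolding w_def using tendsto_power[OF lim_1_over_n, of "Suc N"] by (simp add: power_one_over)
    ultimately have "cmod (c - h m) * w m \<le> 2 * H2_norm h * w (Suc m)"
      using const by (rule norm_diff_le_if_telescoping_sum_eq_0[OF norm_le_H2_norm[OF h]])
    also have "w (Suc m) = q ^ Suc N * w m"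
      using \<open>1 \<le> m\<close> by (simp add: w_def q_def power_divide)
    finally have "cmod (c - h m) * w m \<le> (2 * H2_norm h * q ^ Suc N) * w m"
      by (simp add: mult_ac)
    moreover have "0 < w m"
      using \<open>1 \<le> m\<close> by (simp add: w_def)
    ultimately show ?thesis
      by (rule mult_right_le_imp_le)
  qed
  moreover have "(\<lambda>N. q ^ Suc N) \<longlonglongrightarrow> 0"
    by (rule LIMSEQ_Suc[OF LIMSEQ_power_zero]) (simp add: q_def)
  then have "(\<lambda>N. 2 * H2_norm h * q ^ Suc N) \<longlonglongrightarrow> 0"
    by (rule tendsto_mult_right_zero)
  ultimately have "cmod (c - h m) \<le> 0"
    by (intro LIMSEQ_le_const[where X = "\<lambda>N. 2 * H2_norm h * q ^ Suc N"]) auto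
  then show ?thesis
    by simp
qed

lemma H2_eq_0_if_inverse_power_sums_vanish:
  assumes h: "h \<in> H2"
    and sums: "\<And>N. (\<lambda>k. h k * of_real (1 / real (Suc k) ^ Suc N - 1 / real k ^ Suc N)) sums 0"
  shows "h = (\<lambda>k. 0)"
proof -
  define c where "c = h 0"
  have const: "h k = c" for k
  proof (induction k rule: less_induct)
    case (less k)
    show ?case
    proof (cases "k = 0")
      case True
      then show ?thesis
        by (simp add: c_def)
    next
      case False
      show ?thesis
        by (rule coefficient_eq_if_inverse_power_sums_vanish[OF h sums]) (use False less.IH in auto)
    qed
  qed
  have "summable (\<lambda>k. (cmod c)\<^sup>2)"
    using H2_summable[OF h] by (simp add: const)
  then show ?thesis
    by (simp add: fun_eq_iff const summable_const_iff)
qed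

\<comment> \<open>also for \<open>k = 0\<close>, where both \<open>0 powr _\<close> and \<open>1 / 0\<close> are \<open>0\<close>\<close>
lemma pow_increment_of_nat:
  "pow_increment (of_nat (Suc (Suc N))) k = of_real (1 / real (Suc k) ^ Suc N - 1 / real k ^ Suc N)"
proof -
  have pow: "of_nat n powr (1 - of_nat (Suc (Suc N))) = complex_of_real (1 / real n ^ Suc N)" for n
  proof (cases "n = 0")
    case False
    have exponent: "(1 - of_nat (Suc (Suc N)) :: complex) = - of_nat (Suc N)"
      by simp
    have "(of_nat n :: complex) powr (1 - of_nat (Suc (Suc N))) = inverse (of_nat n powr of_nat (Suc N))"
      by (simp only: exponent powr_minus)
    also have "\<dots> = inverse (of_nat n ^ Suc N)"
      using False by (subst powr_complexpow) auto
    finally show ?thesis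
      by (simp add: divide_inverse)
  qed simp
  show ?thesis
    unfolding pow_increment_def of_real_diff pow ..
qed

lemma H2_eq_0_if_pow_increment_series_vanishes:
  assumes h: "h \<in> H2" and strip: "\<And>s. 1 / 2 < Re s \<Longrightarrow> Re s < 1 \<Longrightarrow> pow_increment_series h s = 0"
  shows "h = (\<lambda>k. 0)"
proof (rule H2_eq_0_if_inverse_power_sums_vanish[OF h])
  fix N
  have "1 / 2 < Re (of_nat (Suc (Suc N)) :: complex)"
    by simp
  then have "(\<lambda>k. h k * pow_increment (of_nat (Suc (Suc N))) k) sums 0"
    using pow_increment_series_eq_0[OF h strip] summable_mult_H2[OF h pow_increment_H2]
    by (metis pow_increment_series_def summable_sums)
  then show "(\<lambda>k. h k * of_real (1 / real (Suc k) ^ Suc N - 1 / real k ^ Suc N)) sums 0"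
    by (simp only: pow_increment_of_nat)
qed

definition kernel_span :: "(nat \<Rightarrow> complex) set" where
  "kernel_span = {(\<lambda>k. \<Sum>s\<in>S. c s * zeta_kernel s k) | S c. finite S \<and> S \<subseteq> {s. 1 / 2 < Re s \<and> Re s < 1}}"

lemma zeta_kernel_in_kernel_span:
  assumes "1 / 2 < Re s" and "Re s < 1"
  shows "zeta_kernel s \<in> kernel_span"
  unfolding kernel_span_def using assms
  by (auto intro!: exI[of _ "{s}"] exI[of _ "\<lambda>_. 1"])

lemma H2_subspace_kernel_span: "H2_subspace kernel_span"
  unfolding H2_subspace_def
proof (intro conjI ballI allI subsetI)
  fix g
  assume "g \<in> kernel_span"
  then show "g \<in> H2"
    unfolding kernel_span_def by (auto intro!: H2_sum zeta_kernel_H2)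
next
  show "(\<lambda>k. 0) \<in> kernel_span"
    unfolding kernel_span_def by (auto intro!: exI[of _ "{}"])
next
  fix a v
  assume "v \<in> kernel_span"
  then obtain S c where "finite S" "S \<subseteq> {s. 1 / 2 < Re s \<and> Re s < 1}"
    and v: "v = (\<lambda>k. \<Sum>s\<in>S. c s * zeta_kernel s k)"
    unfolding kernel_span_def by blast
  moreover have "(\<lambda>k. a * v k) = (\<lambda>k. \<Sum>s\<in>S. (a * c s) * zeta_kernel s k)"
    unfolding v by (simp add: sum_distrib_left mult.assoc)
  ultimately show "(\<lambda>k. a * v k) \<in> kernel_span"
    unfolding kernel_span_def by (intro CollectI exI[of _ S] exI[of _ "\<lambda>s. a * c s"]) auto
next
  fix u v
  assume "u \<in> kernel_span" and "v \<in> kernel_span"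
  then obtain S c T d where S: "finite S" "S \<subseteq> {s. 1 / 2 < Re s \<and> Re s < 1}"
    and T: "finite T" "T \<subseteq> {s. 1 / 2 < Re s \<and> Re s < 1}"
    and u: "u = (\<lambda>k. \<Sum>s\<in>S. c s * zeta_kernel s k)" and v: "v = (\<lambda>k. \<Sum>s\<in>T. d s * zeta_kernel s k)"
    unfolding kernel_span_def by blast
  define e where "e s = (if s \<in> S then c s else 0) + (if s \<in> T then d s else 0)" for s
  have "(\<lambda>k. u k + v k) = (\<lambda>k. \<Sum>s\<in>S \<union> T. e s * zeta_kernel s k)"
  proof
    fix k
    have "u k = (\<Sum>s\<in>S \<union> T. (if s \<in> S then c s else 0) * zeta_kernel s k)"
      unfolding u using S(1) T(1) by (intro sum.mono_neutral_cong_left) auto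
    moreover have "v k = (\<Sum>s\<in>S \<union> T. (if s \<in> T then d s else 0) * zeta_kernel s k)"
      unfolding v using S(1) T(1) by (intro sum.mono_neutral_cong_left) auto
    ultimately show "u k + v k = (\<Sum>s\<in>S \<union> T. e s * zeta_kernel s k)"
      by (simp add: e_def distrib_right sum.distrib)
  qed
  with S T show "(\<lambda>k. u k + v k) \<in> kernel_span"
    unfolding kernel_span_def by (intro CollectI exI[of _ "S \<union> T"] exI[of _ e]) auto
qed

theorem mainTheorem13:
  shows "\<forall>f \<in> H2. \<forall>\<epsilon> > 0. \<exists>S c. finite S \<and> S \<subseteq> {s. 1/2 < Re s \<and> Re s < 1} \<and>
           H2_norm (\<lambda>k. f k - (\<Sum>s\<in>S. c s * zeta_kernel s k)) < \<epsilon>"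
proof (intro ballI allI impI)
  fix f :: "nat \<Rightarrow> complex" and \<epsilon> :: real
  assume f: "f \<in> H2" and "0 < \<epsilon>"
  show "\<exists>S c. finite S \<and> S \<subseteq> {s. 1/2 < Re s \<and> Re s < 1} \<and>
          H2_norm (\<lambda>k. f k - (\<Sum>s\<in>S. c s * zeta_kernel s k)) < \<epsilon>"
  proof (rule ccontr)
    assume "\<not> ?thesis"
    then have "\<epsilon> \<le> H2_norm (\<lambda>k. f k - g k)" if "g \<in> kernel_span" for g
      using that unfolding kernel_span_def by (auto simp: not_less)
    then obtain h where h: "h \<in> H2" "h \<noteq> (\<lambda>k. 0)"
      and orth: "\<And>v. v \<in> kernel_span \<Longrightarrow> H2_inner h v = 0"
      using H2_nonzero_orthogonal_if_not_dense[OF H2_subspace_kernel_span f \<open>0 < \<epsilon>\<close>] by blast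
    have "pow_increment_series h s = 0" if "1 / 2 < Re s" and "Re s < 1" for s
      using orth[OF zeta_kernel_in_kernel_span[OF that]] H2_inner_zeta_kernel[OF h(1) that(1)] that
      by auto
    then show False
      using H2_eq_0_if_pow_increment_series_vanishes h by blast
  qed
qed

end
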